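(* The map $c\mapsto G(c)$ from $\mathbb{R}^m$ to the space of convex bodies of $\mathbb{R}^m$ (with the Hausdorff distance) is continuous. Moreover, for every $c\in\mathbb{R}^m\setminus\{0\}$, the map $t\mapsto G(tc)$ is strictly increasing with respect to inclusion on $t>0$.
   Context: For a convex body $K\subset\mathbb{R}^m$ its support function is $h_K(u)=\sup\{\langle u,x\rangle: x\in K\}$, and the Hausdorff distance between convex bodies is $d(K,L)=\sup_{\|u\|=1}|h_K(u)-h_L(u)|$. For an integrable random vector $X\in\mathbb{R}^m$, the Vitale zonoid $\mathbb{E}\underline{X}$ is the convex body with support function $h_{\mathbb{E}\underline{X}}(u)=\frac12\mathbb{E}|\langle u,X\rangle|$. For $c\in\mathbb{R}^m$, $G(c):=\mathbb{E}\underline{c+\xi}$ where $\xi\in\mathbb{R}^m$ is a standard Gaussian vector. *)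

theory Defs
  imports "HOL-Probability.Probability"
begin

definition support_fun :: "'a::euclidean_space set \<Rightarrow> 'a \<Rightarrow> real" where
  "support_fun K u = (SUP x\<in>K. inner u x)"

definition hausdorff_cb :: "'a::euclidean_space set \<Rightarrow> 'a set \<Rightarrow> real" where
  "hausdorff_cb K L = (SUP u\<in>sphere 0 1. \<bar>support_fun K u - support_fun L u\<bar>)"

text \<open>Vitale zonoid of an integrable random vector X on a probability space M:
  the convex body whose support function is u \<mapsto> 1/2 E|<u,X>|.\<close>
definition vitale_zonoid :: "'b measure \<Rightarrow> ('b \<Rightarrow> 'a::euclidean_space) \<Rightarrow> 'a set" where
  "vitale_zonoid M X = {x. \<forall>u. inner u x \<le> (1/2) * (\<integral>\<omega>. \<bar>inner u (X \<omega>)\<bar> \<partial>M)}"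

definition std_gauss_density :: "'a::euclidean_space \<Rightarrow> real" where
  "std_gauss_density x = (2 * pi) powr (- real DIM('a) / 2) * exp (- (norm x)\<^sup>2 / 2)"

definition std_gauss :: "'a::euclidean_space measure" where
  "std_gauss = density lborel (\<lambda>x. ennreal (std_gauss_density x))"

definition G :: "'a::euclidean_space \<Rightarrow> 'a set" where
  "G c = vitale_zonoid std_gauss (\<lambda>\<xi>. c + \<xi>)"

end

theory Submission
  imports Defs
begin

(* The support function of the Vitale zonoid of X is u |-> E|<u,X>|/2, attained at the point
   E[sgn<u,X> X]/2 of the zonoid. Hence the support functions of G(c) and G(c0) differ by at most
   |<u, c - c0>|/2, so c |-> G(c) is 1/2-Lipschitz for the Hausdorff distance.
   By symmetry of the Gaussian and |a + z| + |a - z| = 2 max |a| |z|, the support function of G(c)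
   is u |-> E max |<u,c>| |<u,xi>| / 2. Along t |-> t c it is nondecreasing, and in direction c it
   increases strictly because |<c,xi>| stays below s |c|^2 with positive probability; a support
   point of G(t c) in direction c therefore lies outside G(s c). *)

section \<open>Vitale zonoids and their support functions\<close>

definition zonoid_support :: "'b measure \<Rightarrow> ('b \<Rightarrow> 'a::euclidean_space) \<Rightarrow> 'a \<Rightarrow> real" where
  "zonoid_support M X u = 1/2 * (\<integral>\<omega>. \<bar>u \<bullet> X \<omega>\<bar> \<partial>M)"

lemma vitale_zonoid_eq: "vitale_zonoid M X = {x. \<forall>u. u \<bullet> x \<le> zonoid_support M X u}"
  by (simp add: vitale_zonoid_def zonoid_support_def)

lemma zonoid_support_attained:
  assumes X: "integrable M X"
  shows "\<exists>x\<in>vitale_zonoid M X. u \<bullet> x = zonoid_support M X u"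
proof -
  define s where "s \<omega> = sgn (u \<bullet> X \<omega>)" for \<omega>
  have [measurable]: "X \<in> borel_measurable M"
    using X by (rule borel_measurable_integrable)
  have s_le_1: "\<bar>s \<omega>\<bar> \<le> 1" for \<omega>
    by (simp add: s_def abs_sgn_eq)
  have sX: "integrable M (\<lambda>\<omega>. s \<omega> *\<^sub>R X \<omega>)"
    using X
  proof (rule Bochner_Integration.integrable_bound)
    show "AE \<omega> in M. norm (s \<omega> *\<^sub>R X \<omega>) \<le> norm (X \<omega>)"
      using s_le_1 by (auto intro!: mult_left_le_one_le)
  qed (simp add: s_def)
  define x where "x = (1/2) *\<^sub>R (\<integral>\<omega>. s \<omega> *\<^sub>R X \<omega> \<partial>M)"
  have inner_x: "v \<bullet> x = 1/2 * (\<integral>\<omega>. s \<omega> * (v \<bullet> X \<omega>) \<partial>M)" for v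
    using integral_inner_right[OF sX, of v] by (simp add: x_def)
  have "v \<bullet> x \<le> zonoid_support M X v" for v
  proof -
    have "(\<integral>\<omega>. s \<omega> * (v \<bullet> X \<omega>) \<partial>M) \<le> (\<integral>\<omega>. \<bar>v \<bullet> X \<omega>\<bar> \<partial>M)"
    proof (rule integral_mono)
      show "integrable M (\<lambda>\<omega>. s \<omega> * (v \<bullet> X \<omega>))"
        using integrable_inner_right[OF sX, of v] by simp
      show "integrable M (\<lambda>\<omega>. \<bar>v \<bullet> X \<omega>\<bar>)"
        using X by auto
      fix \<omega>
      have "s \<omega> * (v \<bullet> X \<omega>) \<le> \<bar>s \<omega>\<bar> * \<bar>v \<bullet> X \<omega>\<bar>"
        by (metis abs_ge_self abs_mult)
      also have "\<dots> \<le> \<bar>v \<bullet> X \<omega>\<bar>"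
        using s_le_1 by (simp add: mult_left_le_one_le)
      finally show "s \<omega> * (v \<bullet> X \<omega>) \<le> \<bar>v \<bullet> X \<omega>\<bar>" .
    qed
    then show ?thesis
      by (simp add: inner_x zonoid_support_def)
  qed
  moreover have "u \<bullet> x = zonoid_support M X u"
    by (simp add: inner_x zonoid_support_def s_def abs_sgn mult.commute)
  ultimately show ?thesis
    by (auto simp: vitale_zonoid_eq)
qed

lemma support_fun_vitale_zonoid:
  assumes "integrable M X"
  shows "support_fun (vitale_zonoid M X) u = zonoid_support M X u"
proof -
  obtain x where "x \<in> vitale_zonoid M X" "u \<bullet> x = zonoid_support M X u"
    using zonoid_support_attained[OF assms] by blast
  then show ?thesis
    unfolding support_fun_def
    by (intro cSup_eq_maximum) (auto simp: vitale_zonoid_eq intro: rev_image_eqI)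
qed

lemma vitale_zonoid_psubset:
  assumes Y: "integrable N Y"
    and le: "\<And>u. zonoid_support M X u \<le> zonoid_support N Y u"
    and less: "zonoid_support M X v < zonoid_support N Y v"
  shows "vitale_zonoid M X \<subset> vitale_zonoid N Y"
proof
  show "vitale_zonoid M X \<subseteq> vitale_zonoid N Y"
    using le by (auto simp: vitale_zonoid_eq intro: order_trans)
  obtain y where y: "y \<in> vitale_zonoid N Y" "v \<bullet> y = zonoid_support N Y v"
    using zonoid_support_attained[OF Y] by blast
  with less have "\<not> v \<bullet> y \<le> zonoid_support M X v"
    by simp
  then have "y \<notin> vitale_zonoid M X"
    by (auto simp: vitale_zonoid_eq)
  with y show "vitale_zonoid M X \<noteq> vitale_zonoid N Y"
    by blast
qed

lemma zonoid_support_lipschitz: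
  assumes X: "integrable M X" and Y: "integrable M Y"
  shows "\<bar>zonoid_support M X u - zonoid_support M Y u\<bar>
           \<le> 1/2 * norm u * (\<integral>\<omega>. norm (X \<omega> - Y \<omega>) \<partial>M)"
proof -
  have "\<bar>(\<integral>\<omega>. \<bar>u \<bullet> X \<omega>\<bar> \<partial>M) - (\<integral>\<omega>. \<bar>u \<bullet> Y \<omega>\<bar> \<partial>M)\<bar>
        = \<bar>\<integral>\<omega>. \<bar>u \<bullet> X \<omega>\<bar> - \<bar>u \<bullet> Y \<omega>\<bar> \<partial>M\<bar>"
    using X Y by simp
  also have "\<dots> \<le> (\<integral>\<omega>. \<bar>\<bar>u \<bullet> X \<omega>\<bar> - \<bar>u \<bullet> Y \<omega>\<bar>\<bar> \<partial>M)"
    by (rule integral_abs_bound)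
  also have "\<dots> \<le> (\<integral>\<omega>. norm u * norm (X \<omega> - Y \<omega>) \<partial>M)"
  proof (rule integral_mono)
    fix \<omega>
    have "\<bar>\<bar>u \<bullet> X \<omega>\<bar> - \<bar>u \<bullet> Y \<omega>\<bar>\<bar> \<le> \<bar>u \<bullet> (X \<omega> - Y \<omega>)\<bar>"
      by (simp add: inner_diff_right abs_triangle_ineq3)
    also have "\<dots> \<le> norm u * norm (X \<omega> - Y \<omega>)"
      by (rule Cauchy_Schwarz_ineq2)
    finally show "\<bar>\<bar>u \<bullet> X \<omega>\<bar> - \<bar>u \<bullet> Y \<omega>\<bar>\<bar> \<le> norm u * norm (X \<omega> - Y \<omega>)" .
  qed (use X Y in auto)
  finally have "\<bar>(\<integral>\<omega>. \<bar>u \<bullet> X \<omega>\<bar> \<partial>M) - (\<integral>\<omega>. \<bar>u \<bullet> Y \<omega>\<bar> \<partial>M)\<bar>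
      \<le> norm u * (\<integral>\<omega>. norm (X \<omega> - Y \<omega>) \<partial>M)"
    by simp
  moreover have "\<bar>zonoid_support M X u - zonoid_support M Y u\<bar>
      = \<bar>(\<integral>\<omega>. \<bar>u \<bullet> X \<omega>\<bar> \<partial>M) - (\<integral>\<omega>. \<bar>u \<bullet> Y \<omega>\<bar> \<partial>M)\<bar> / 2"
    by (simp add: zonoid_support_def flip: diff_divide_distrib)
  ultimately show ?thesis
    by simp
qed

lemma hausdorff_cb_bounded:
  fixes K L :: "'a::euclidean_space set"
  assumes "\<And>u. u \<in> sphere 0 1 \<Longrightarrow> \<bar>support_fun K u - support_fun L u\<bar> \<le> B"
  shows "hausdorff_cb K L \<in> {0..B}"
proof -
  have "sphere (0::'a) 1 \<noteq> {}"
    by simp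
  then obtain u :: 'a where u: "u \<in> sphere 0 1"
    by blast
  have "bdd_above ((\<lambda>u. \<bar>support_fun K u - support_fun L u\<bar>) ` sphere 0 1)"
    using assms by (intro bdd_aboveI2)
  then show ?thesis
    unfolding hausdorff_cb_def using u assms
    by (auto intro: cSUP_upper2 cSUP_least)
qed

section \<open>The standard Gaussian measure\<close>

lemma std_gauss_density_eq_prod:
  "std_gauss_density (x::'a::euclidean_space) = (\<Prod>b\<in>Basis. std_normal_density (x \<bullet> b))"
proof -
  have "(norm x)\<^sup>2 = (\<Sum>b\<in>Basis. (x \<bullet> b)\<^sup>2)"
    unfolding power2_norm_eq_inner euclidean_inner[of x x] by (simp add: power2_eq_square)
  then have exp: "exp (- (norm x)\<^sup>2 / 2) = (\<Prod>b\<in>Basis. exp (- (x \<bullet> b)\<^sup>2 / 2))"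
    by (simp add: exp_sum[symmetric] sum_divide_distrib sum_negf)
  have const: "(2 * pi) powr (- real DIM('a) / 2) = (1 / sqrt (2 * pi)) ^ DIM('a)"
    by (simp add: powr_half_sqrt[symmetric] powr_realpow[symmetric] powr_powr powr_minus_divide
        powr_divide)
  show ?thesis
    unfolding std_gauss_density_def std_normal_density_def prod.distrib exp const by simp
qed

lemma std_gauss_density_pos: "0 < std_gauss_density x"
  by (simp add: std_gauss_density_def)

lemma borel_measurable_std_gauss_density[measurable]: "std_gauss_density \<in> borel_measurable borel"
  unfolding std_gauss_density_def by measurable

lemma space_std_gauss[simp]: "space std_gauss = UNIV"
  by (simp add: std_gauss_def)

lemma sets_std_gauss[measurable_cong, simp]: "sets std_gauss = sets borel"
  by (simp add: std_gauss_def)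

lemma nn_integral_std_gauss_prod:
  assumes [measurable]: "\<And>b. b \<in> Basis \<Longrightarrow> f b \<in> borel_measurable borel"
  shows "(\<integral>\<^sup>+x. (\<Prod>b\<in>Basis. f b (x \<bullet> b)) \<partial>std_gauss)
       = (\<Prod>b\<in>(Basis::'a::euclidean_space set). \<integral>\<^sup>+t. ennreal (std_normal_density t) * f b t \<partial>lborel)"
proof -
  have "(\<integral>\<^sup>+x. (\<Prod>b\<in>Basis. f b (x \<bullet> b)) \<partial>std_gauss)
      = (\<integral>\<^sup>+x. (\<Prod>b\<in>Basis. ennreal (std_normal_density (x \<bullet> b)) * f b (x \<bullet> b))
           \<partial>(lborel::'a measure))"
    by (simp add: std_gauss_def nn_integral_density std_gauss_density_eq_prod prod_ennreal prod.distrib)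
  also have "\<dots> = (\<Prod>b\<in>(Basis::'a set). \<integral>\<^sup>+t. ennreal (std_normal_density t) * f b t \<partial>lborel)"
    by (rule nn_integral_lborel_prod) auto
  finally show ?thesis .
qed

lemma nn_integral_std_normal_density: "(\<integral>\<^sup>+t. ennreal (std_normal_density t) \<partial>lborel) = 1"
proof -
  have "emeasure (density lborel (\<lambda>t. ennreal (std_normal_density t))) UNIV = 1"
    using prob_space.emeasure_space_1[OF prob_space_normal_density, of 1 0] by simp
  then show ?thesis
    by (simp add: emeasure_density)
qed

lemma prob_space_std_gauss: "prob_space (std_gauss :: 'a::euclidean_space measure)"
proof
  have "emeasure (std_gauss :: 'a measure) (space std_gauss)
      = (\<integral>\<^sup>+x. (\<Prod>b\<in>(Basis::'a set). (\<lambda>_ _. 1) b (x \<bullet> b)) \<partial>std_gauss)"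
    by simp
  also have "\<dots> = (\<Prod>b\<in>(Basis::'a set). \<integral>\<^sup>+t. ennreal (std_normal_density t) * 1 \<partial>lborel)"
    by (rule nn_integral_std_gauss_prod) simp
  finally show "emeasure (std_gauss :: 'a measure) (space std_gauss) = 1"
    by (simp add: nn_integral_std_normal_density)
qed

lemma integrable_std_gauss_inner_Basis:
  assumes b: "b \<in> Basis"
  shows "integrable std_gauss (\<lambda>x::'a::euclidean_space. x \<bullet> b)"
proof (rule integrableI_bounded)
  define f where "f b' t = (if b' = b then ennreal \<bar>t\<bar> else 1)" for b' :: 'a and t :: real
  have "(\<integral>\<^sup>+x. ennreal (norm (x \<bullet> b)) \<partial>std_gauss)
      = (\<integral>\<^sup>+x. (\<Prod>b'\<in>Basis. f b' (x \<bullet> b')) \<partial>std_gauss)"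
    using b by (simp add: f_def)
  also have "\<dots> = (\<Prod>b'\<in>(Basis::'a set). \<integral>\<^sup>+t. ennreal (std_normal_density t) * f b' t \<partial>lborel)"
    by (rule nn_integral_std_gauss_prod) (simp add: f_def)
  also have "\<dots> = (\<Prod>b'\<in>(Basis::'a set).
      if b' = b then \<integral>\<^sup>+t. ennreal (std_normal_density t * \<bar>t\<bar>) \<partial>lborel else 1)"
    by (intro prod.cong) (auto simp: f_def nn_integral_std_normal_density ennreal_mult)
  also have "\<dots> = (\<integral>\<^sup>+t. ennreal (std_normal_density t * \<bar>t\<bar>) \<partial>lborel)"
    using b by simp
  also have "\<dots> < \<infinity>"
    using integrable_std_normal_moment_abs[of 1] by (simp add: integrable_iff_bounded)
  finally show "(\<integral>\<^sup>+x. ennreal (norm (x \<bullet> b)) \<partial>std_gauss) < \<infinity>" .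
qed simp

lemma integrable_std_gauss_id: "integrable std_gauss (\<lambda>x::'a::euclidean_space. x)"
proof -
  have "integrable std_gauss (\<lambda>x::'a. \<Sum>b\<in>Basis. (x \<bullet> b) *\<^sub>R b)"
    by (intro Bochner_Integration.integrable_sum integrable_scaleR_left integrable_std_gauss_inner_Basis)
  then show ?thesis
    by (simp add: euclidean_representation)
qed

lemma integrable_std_gauss_inner: "integrable std_gauss (\<lambda>\<xi>::'a::euclidean_space. u \<bullet> \<xi>)"
  using integrable_std_gauss_id by (rule integrable_inner_right)

lemma integrable_std_gauss_shift: "integrable std_gauss (\<lambda>\<xi>::'a::euclidean_space. c + \<xi>)"
proof -
  interpret prob_space "std_gauss :: 'a measure"
    by (rule prob_space_std_gauss)
  show ?thesis
    by (intro Bochner_Integration.integrable_add integrable_const integrable_std_gauss_id)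
qed

lemma distr_std_gauss_uminus: "distr std_gauss borel uminus = (std_gauss :: 'a::euclidean_space measure)"
proof -
  have "distr lborel borel uminus = (lborel :: 'a measure)"
    using lborel_affine[of "-1" "0::'a"] by (simp add: density_1)
  then show ?thesis
    using density_distr[of "\<lambda>x. ennreal (std_gauss_density x)" borel uminus "lborel :: 'a measure"]
    by (simp add: std_gauss_def std_gauss_density_def)
qed

lemma integral_std_gauss_abs_add:
  fixes u :: "'a::euclidean_space"
  shows "(\<integral>\<xi>. \<bar>a + u \<bullet> \<xi>\<bar> \<partial>std_gauss) = (\<integral>\<xi>. max \<bar>a\<bar> \<bar>u \<bullet> \<xi>\<bar> \<partial>std_gauss)"
proof -
  interpret prob_space "std_gauss :: 'a measure"
    by (rule prob_space_std_gauss)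
  have "(\<integral>\<xi>. \<bar>a - u \<bullet> \<xi>\<bar> \<partial>std_gauss)
      = (\<integral>\<xi>. \<bar>a + u \<bullet> \<xi>\<bar> \<partial>distr std_gauss borel uminus)"
    by (subst integral_distr) auto
  then have reflect: "(\<integral>\<xi>. \<bar>a - u \<bullet> \<xi>\<bar> \<partial>std_gauss) = (\<integral>\<xi>. \<bar>a + u \<bullet> \<xi>\<bar> \<partial>std_gauss)"
    by (simp add: distr_std_gauss_uminus)
  have "\<bar>a + z\<bar> + \<bar>a - z\<bar> = 2 * max \<bar>a\<bar> \<bar>z\<bar>" for z :: real
    by (auto simp: abs_if max_def)
  then have "(\<integral>\<xi>. \<bar>a + u \<bullet> \<xi>\<bar> \<partial>std_gauss) + (\<integral>\<xi>. \<bar>a - u \<bullet> \<xi>\<bar> \<partial>std_gauss)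
      = 2 * (\<integral>\<xi>. max \<bar>a\<bar> \<bar>u \<bullet> \<xi>\<bar> \<partial>std_gauss)"
    using integrable_std_gauss_inner[of u]
    by (subst Bochner_Integration.integral_add[symmetric]) auto
  with reflect show ?thesis
    by simp
qed

lemma emeasure_std_gauss_ball_pos:
  assumes "0 < r"
  shows "0 < emeasure std_gauss (ball (x::'a::euclidean_space) r)"
proof -
  have "emeasure lborel (ball x r) \<noteq> 0"
    using assms by (simp add: emeasure_ball unit_ball_vol_pos[THEN dual_order.strict_implies_not_eq])
  then have "\<not> (AE y in lborel. y \<notin> ball x r)"
    by (subst AE_iff_measurable[where N="ball x r"]) auto
  moreover have "ennreal (std_gauss_density y) * indicator (ball x r) y = 0 \<longleftrightarrow> y \<notin> ball x r" for y
    using std_gauss_density_pos[of y] by (simp split: split_indicator)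
  ultimately have "(\<integral>\<^sup>+y. ennreal (std_gauss_density y) * indicator (ball x r) y \<partial>lborel) \<noteq> 0"
    by (subst nn_integral_0_iff_AE) (auto simp del: mem_ball)
  then show ?thesis
    by (simp add: std_gauss_def emeasure_density zero_less_iff_neq_zero)
qed

section \<open>Gaussian zonoids\<close>

lemma hausdorff_cb_G_le: "hausdorff_cb (G c) (G c0) \<in> {0 .. norm (c - c0) / 2}"
proof -
  interpret prob_space "std_gauss :: 'a::euclidean_space measure"
    by (rule prob_space_std_gauss)
  show ?thesis
    unfolding G_def
  proof (rule hausdorff_cb_bounded)
    fix u :: 'a
    assume "u \<in> sphere 0 1"
    have "\<bar>zonoid_support std_gauss ((+) c) u - zonoid_support std_gauss ((+) c0) u\<bar>
        \<le> 1/2 * norm u * (\<integral>\<xi>. norm (c + \<xi> - (c0 + \<xi>)) \<partial>std_gauss)"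
      by (rule zonoid_support_lipschitz[OF integrable_std_gauss_shift integrable_std_gauss_shift])
    with \<open>u \<in> sphere 0 1\<close> prob_space
    show "\<bar>support_fun (vitale_zonoid std_gauss ((+) c)) u
          - support_fun (vitale_zonoid std_gauss ((+) c0)) u\<bar> \<le> norm (c - c0) / 2"
      by (simp add: support_fun_vitale_zonoid integrable_std_gauss_shift)
  qed
qed

lemma zonoid_support_std_gauss_shift:
  fixes c :: "'a::euclidean_space"
  shows "zonoid_support std_gauss (\<lambda>\<xi>. c + \<xi>) u
           = 1/2 * (\<integral>\<xi>. max \<bar>u \<bullet> c\<bar> \<bar>u \<bullet> \<xi>\<bar> \<partial>std_gauss)"
  by (simp add: zonoid_support_def inner_add_right integral_std_gauss_abs_add)

lemma zonoid_support_std_gauss_scale_mono: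
  fixes c :: "'a::euclidean_space"
  assumes "0 \<le> s" "s \<le> t"
  shows "zonoid_support std_gauss (\<lambda>\<xi>. s *\<^sub>R c + \<xi>) u
           \<le> zonoid_support std_gauss (\<lambda>\<xi>. t *\<^sub>R c + \<xi>) u"
proof -
  interpret prob_space "std_gauss :: 'a measure"
    by (rule prob_space_std_gauss)
  have "\<bar>s * (u \<bullet> c)\<bar> \<le> \<bar>t * (u \<bullet> c)\<bar>"
    using assms by (simp add: abs_mult mult_right_mono)
  then show ?thesis
    unfolding zonoid_support_std_gauss_shift using integrable_std_gauss_inner[of u]
    by (auto intro!: integral_mono)
qed

lemma integral_max_abs_strict_mono:
  fixes Z :: "'b \<Rightarrow> real"
  assumes "finite_measure M" and Z: "integrable M Z" and "a < b"
    and pos: "0 < measure M {\<omega>\<in>space M. \<bar>Z \<omega>\<bar> \<le> a}"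
  shows "(\<integral>\<omega>. max a \<bar>Z \<omega>\<bar> \<partial>M) < (\<integral>\<omega>. max b \<bar>Z \<omega>\<bar> \<partial>M)"
proof -
  interpret finite_measure M by fact
  define A where "A = {\<omega>\<in>space M. \<bar>Z \<omega>\<bar> \<le> a}"
  have [measurable]: "Z \<in> borel_measurable M"
    using Z by (rule borel_measurable_integrable)
  have "0 < (b - a) * measure M A"
    using pos \<open>a < b\<close> by (simp add: A_def)
  also have "\<dots> = (\<integral>\<omega>. (b - a) * indicator A \<omega> \<partial>M)"
    by (simp add: A_def)
  also have "\<dots> \<le> (\<integral>\<omega>. (max b \<bar>Z \<omega>\<bar>) - (max a \<bar>Z \<omega>\<bar>) \<partial>M)"
  proof (rule integral_mono)
    show "(b - a) * indicator A \<omega> \<le> (max b \<bar>Z \<omega>\<bar>) - (max a \<bar>Z \<omega>\<bar>)" for \<omega>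
      using \<open>a < b\<close> by (auto simp: A_def max_def split: split_indicator)
  qed (use Z in \<open>auto simp: A_def less_top[symmetric]\<close>)
  also have "\<dots> = (\<integral>\<omega>. max b \<bar>Z \<omega>\<bar> \<partial>M) - (\<integral>\<omega>. max a \<bar>Z \<omega>\<bar> \<partial>M)"
    using Z by (intro Bochner_Integration.integral_diff) auto
  finally show ?thesis
    by simp
qed

lemma zonoid_support_std_gauss_scale_strict_mono:
  fixes c :: "'a::euclidean_space"
  assumes "c \<noteq> 0" "0 < s" "s < t"
  shows "zonoid_support std_gauss (\<lambda>\<xi>. s *\<^sub>R c + \<xi>) c
           < zonoid_support std_gauss (\<lambda>\<xi>. t *\<^sub>R c + \<xi>) c"
proof -
  interpret prob_space "std_gauss :: 'a measure"
    by (rule prob_space_std_gauss)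
  have "ball 0 (s * norm c) \<subseteq> {\<xi>. \<bar>c \<bullet> \<xi>\<bar> \<le> s * norm c ^ 2}"
  proof
    fix \<xi> :: 'a
    assume "\<xi> \<in> ball 0 (s * norm c)"
    then have "norm c * norm \<xi> \<le> norm c * (s * norm c)"
      by (intro mult_left_mono) auto
    then show "\<xi> \<in> {\<xi>. \<bar>c \<bullet> \<xi>\<bar> \<le> s * norm c ^ 2}"
      using Cauchy_Schwarz_ineq2[of c \<xi>] by (simp add: power2_eq_square mult_ac)
  qed
  then have "measure std_gauss (ball (0::'a) (s * norm c))
      \<le> measure std_gauss {\<xi>. \<bar>c \<bullet> \<xi>\<bar> \<le> s * norm c ^ 2}"
    by (rule finite_measure_mono) measurable
  moreover have "0 < measure std_gauss (ball (0::'a) (s * norm c))"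
    using emeasure_std_gauss_ball_pos[of "s * norm c" "0::'a"] assms by (simp add: emeasure_eq_measure)
  ultimately have "0 < measure std_gauss {\<xi>. \<bar>c \<bullet> \<xi>\<bar> \<le> s * norm c ^ 2}"
    by linarith
  then have "(\<integral>\<xi>. max (s * norm c ^ 2) \<bar>c \<bullet> \<xi>\<bar> \<partial>std_gauss)
      < (\<integral>\<xi>. max (t * norm c ^ 2) \<bar>c \<bullet> \<xi>\<bar> \<partial>std_gauss)"
    using assms integrable_std_gauss_inner[of c]
    by (intro integral_max_abs_strict_mono) (auto intro: finite_measure_axioms)
  then show ?thesis
    using assms by (simp add: zonoid_support_std_gauss_shift power2_norm_eq_inner)
qed

theorem proposition2p9:
  shows "(\<forall>c0 :: 'a::euclidean_space.
            ((\<lambda>c. hausdorff_cb (G c) (G c0)) \<longlongrightarrow> 0) (at c0))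
       \<and> (\<forall>(c :: 'a) (s :: real) (t :: real).
            c \<noteq> 0 \<longrightarrow> 0 < s \<longrightarrow> s < t \<longrightarrow> G (s *\<^sub>R c) \<subset> G (t *\<^sub>R c))"
proof (intro conjI allI impI)
  fix c0 :: 'a
  show "((\<lambda>c. hausdorff_cb (G c) (G c0)) \<longlongrightarrow> 0) (at c0)"
  proof (rule Lim_null_comparison)
    have "norm (hausdorff_cb (G c) (G c0)) \<le> norm (c - c0) / 2" for c
      using hausdorff_cb_G_le[of c c0] by simp
    then show "\<forall>\<^sub>F c in at c0. norm (hausdorff_cb (G c) (G c0)) \<le> norm (c - c0) / 2"
      by (simp add: always_eventually)
    show "((\<lambda>c. norm (c - c0) / 2) \<longlongrightarrow> 0) (at c0)"
      by (intro tendsto_eq_intros) auto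
  qed
next
  fix c :: 'a and s t :: real
  assume "c \<noteq> 0" "0 < s" "s < t"
  then show "G (s *\<^sub>R c) \<subset> G (t *\<^sub>R c)"
    unfolding G_def
    by (intro vitale_zonoid_psubset[OF integrable_std_gauss_shift, where v=c]
        zonoid_support_std_gauss_scale_mono zonoid_support_std_gauss_scale_strict_mono) auto
qed

end
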